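(* Let $v$ be an odd positive integer and $k$ a positive integer. Every $(v,k)$ cyclic difference packing $(\mathbb{Z}_v,\mathcal{D})$ is a $(v,k,1)$ non-half-sum disjoint packing, i.e., $(\mathbb{Z}_v,\{\mathcal{D}\})$ is a $(v,k,1)$ NHSDP.
   Context: A $(v,k)$ cyclic difference packing (CDP) is a pair $(\mathbb{Z}_v,\mathcal{D})$ where $\mathcal{D}=\{d_1,\dots,d_k\}$ is a $k$-subset of $\mathbb{Z}_v$ such that each non-zero element of $\mathbb{Z}_v$ has at most one representation as a difference $d_i-d_j$ with $d_i,d_j\in\mathcal{D}$. For odd $v$, a $(v,g,b)$ non-half-sum disjoint packing (NHSDP) is a pair $(\mathbb{Z}_v,\mathfrak{D})$ where $\mathfrak{D}$ is a family of $b$ subsets ("blocks") of $\mathbb{Z}_v$, each of size $g$, such that (i) any two different blocks are disjoint, and (ii) for each block $\mathcal{D}\in\mathfrak{D}$ and any two different elements $x,y\in\mathcal{D}$, the half-sum $(x+y)\cdot2^{-1}\in\mathbb{Z}_v$ does not belong to any block of $\mathfrak{D}$. *)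

theory Defs
  imports Main
begin

(* Z_v is modelled as the carrier {0..<v} of naturals with arithmetic mod v. *)

definition zdiff :: "nat \<Rightarrow> nat \<Rightarrow> nat \<Rightarrow> nat" where
  "zdiff v x y = nat ((int x - int y) mod int v)"

definition is_CDP :: "nat \<Rightarrow> nat \<Rightarrow> nat set \<Rightarrow> bool" where
  "is_CDP v k D \<longleftrightarrow> D \<subseteq> {0..<v} \<and> card D = k \<and>
     (\<forall>g \<in> {1..<v}. card {(a, b). a \<in> D \<and> b \<in> D \<and> zdiff v a b = g} \<le> 1)"

(* inverse of 2 in Z_v for odd v *)
definition inv2 :: "nat \<Rightarrow> nat" where
  "inv2 v = (v + 1) div 2"

definition half_sum :: "nat \<Rightarrow> nat \<Rightarrow> nat \<Rightarrow> nat" where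
  "half_sum v x y = ((x + y) * inv2 v) mod v"

definition is_NHSDP :: "nat \<Rightarrow> nat \<Rightarrow> nat \<Rightarrow> nat set set \<Rightarrow> bool" where
  "is_NHSDP v g b F \<longleftrightarrow> odd v \<and> finite F \<and> card F = b \<and>
     (\<forall>D \<in> F. D \<subseteq> {0..<v} \<and> card D = g) \<and>
     (\<forall>D1 \<in> F. \<forall>D2 \<in> F. D1 \<noteq> D2 \<longrightarrow> D1 \<inter> D2 = {}) \<and>
     (\<forall>D \<in> F. \<forall>x \<in> D. \<forall>y \<in> D. x \<noteq> y \<longrightarrow> half_sum v x y \<notin> \<Union>F)"

end

theory Submission
  imports Defs
begin

text \<open>If a block contained two distinct elements x, y together with their half-sum z, then
  2z = x + y gives x - z = z - y in Z_v, so this non-zero difference would be represented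
  twice in the block, once by (x, z) and once by (z, y).\<close>

lemma two_mult_half_sum_mod:
  assumes "odd v"
  shows "(2 * half_sum v x y) mod v = (x + y) mod v"
proof -
  have two_inv2: "2 * inv2 v = v + 1"
    using assms unfolding inv2_def by presburger
  have "(2 * half_sum v x y) mod v = (2 * ((x + y) * inv2 v)) mod v"
    unfolding half_sum_def by (simp add: mod_mult_right_eq)
  also have "2 * ((x + y) * inv2 v) = (x + y) + (x + y) * v"
    using two_inv2 by (metis add_mult_distrib2 mult.left_commute mult_1_right add.commute)
  also have "((x + y) + (x + y) * v) mod v = (x + y) mod v"
    by (rule mod_mult_self1)
  finally show ?thesis .
qed

lemma zdiff_eq_zdiff_iff:
  assumes "0 < v"
  shows "zdiff v a b = zdiff v c d \<longleftrightarrow> (int a - int b) mod int v = (int c - int d) mod int v"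
  using assms unfolding zdiff_def by (simp add: eq_nat_nat_iff)

lemma zdiff_less: "0 < v \<Longrightarrow> zdiff v a b < v"
  unfolding zdiff_def by (simp add: nat_less_iff)

lemma zdiff_eq_0_iff:
  assumes "a < v" "b < v"
  shows "zdiff v a b = 0 \<longleftrightarrow> a = b"
proof -
  have "zdiff v a b = 0 \<longleftrightarrow> (int a - int b) mod int v = 0"
    using assms unfolding zdiff_def by (simp add: nat_eq_iff2 order_antisym_conv)
  also have "\<dots> \<longleftrightarrow> int a mod int v = int b mod int v"
    by (simp add: mod_eq_dvd_iff mod_eq_0_iff_dvd)
  also have "\<dots> \<longleftrightarrow> a = b"
    using assms by simp
  finally show ?thesis .
qed

lemma zdiff_half_sum_eq:
  assumes "odd v"
  shows "zdiff v x (half_sum v x y) = zdiff v (half_sum v x y) y"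
proof -
  define z where "z = half_sum v x y"
  have "(int x + int y) mod int v = (2 * int z) mod int v"
    using two_mult_half_sum_mod[OF assms, of x y] unfolding z_def
    by (metis of_nat_add of_nat_mult of_nat_numeral zmod_int)
  then have "int v dvd (int x + int y) - 2 * int z"
    by (simp add: mod_eq_dvd_iff)
  also have "(int x + int y) - 2 * int z = (int x - int z) - (int z - int y)"
    by simp
  finally have "(int x - int z) mod int v = (int z - int y) mod int v"
    by (simp add: mod_eq_dvd_iff)
  moreover have "0 < v"
    using assms by (simp add: odd_pos)
  ultimately show ?thesis
    unfolding z_def[symmetric] by (simp add: zdiff_eq_zdiff_iff)
qed

lemma is_CDP_zdiff_inj:
  assumes "is_CDP v k D" and "a \<in> D" "b \<in> D" "c \<in> D" "d \<in> D"
    and "a \<noteq> b" and "zdiff v a b = zdiff v c d"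
  shows "(a, b) = (c, d)"
proof (rule ccontr)
  assume distinct: "(a, b) \<noteq> (c, d)"
  have D_sub: "D \<subseteq> {0..<v}"
    and packing: "\<forall>g \<in> {1..<v}. card {(a, b). a \<in> D \<and> b \<in> D \<and> zdiff v a b = g} \<le> 1"
    using assms(1) unfolding is_CDP_def by auto
  define g where "g = zdiff v a b"
  let ?R = "{(a, b). a \<in> D \<and> b \<in> D \<and> zdiff v a b = g}"
  have "g \<in> {1..<v}"
    using D_sub assms(2,3,6) zdiff_less[of v a b] zdiff_eq_0_iff[of a v b]
    unfolding g_def by fastforce
  then have "card ?R \<le> 1"
    using packing by blast
  moreover have "finite ?R"
    using D_sub by (auto intro: finite_subset[of _ "D \<times> D"] dest: finite_subset)
  moreover have "{(a, b), (c, d)} \<subseteq> ?R"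
    using assms(2-5,7) unfolding g_def by auto
  ultimately have "card {(a, b), (c, d)} \<le> 1"
    by (meson card_mono order_trans)
  with distinct show False
    by simp
qed

lemma is_CDP_half_sum_notin:
  assumes "is_CDP v k D" "odd v" and "x \<in> D" "y \<in> D" "x \<noteq> y"
  shows "half_sum v x y \<notin> D"
proof
  define z where "z = half_sum v x y"
  assume "half_sum v x y \<in> D"
  then have z_in: "z \<in> D"
    unfolding z_def .
  have midpoint: "zdiff v x z = zdiff v z y"
    unfolding z_def by (rule zdiff_half_sum_eq[OF assms(2)])
  have "z < v" "y < v"
    using assms(1,4) z_in unfolding is_CDP_def by auto
  have "x \<noteq> z"
  proof
    assume "x = z"
    then have "zdiff v z y = 0"
      using midpoint \<open>z < v\<close> zdiff_eq_0_iff[of z v z] by simp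
    then show False
      using \<open>x = z\<close> \<open>z < v\<close> \<open>y < v\<close> assms(5) zdiff_eq_0_iff[of z v y] by simp
  qed
  then have "(x, z) = (z, y)"
    using is_CDP_zdiff_inj[OF assms(1,3) z_in z_in assms(4)] midpoint by blast
  with assms(5) show False
    by simp
qed

theorem lemma5:
  fixes v k :: nat and D :: "nat set"
  assumes "odd v" and "v > 0" and "k > 0" and "is_CDP v k D"
  shows "is_NHSDP v k 1 {D}"
  using assms(1,4) is_CDP_half_sum_notin[OF assms(4,1)]
  unfolding is_NHSDP_def is_CDP_def by auto

end
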